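(* If $X$ is a space such that $\mathbf{w}(X)$ and $\mathbf{aw}(X)$ are not homotopy equivalent, then $X$ is not homotopy equivalent to any first countable space.
   Context: A loop is trivial if path-homotopic to a constant loop. A sequence of loops $\alpha_n$ based at $x$ is a null-sequence if every neighborhood of $x$ contains $\alpha_n([0,1])$ for all but finitely many $n$. $\mathbf{aw}(X)=\{x\in X\mid \text{there is a null-sequence of non-trivial loops based at }x\}$. $\mathbf{w}(X)$ is the subspace of points $x$ at which $X$ is not semilocally simply connected, i.e. every neighborhood of $x$ contains a loop based at $x$ that is non-trivial in $X$. *)

theory Defs
  imports "HOL-Analysis.Analysis"
begin

definition loop_at :: "'a topology \<Rightarrow> 'a \<Rightarrow> (real \<Rightarrow> 'a) \<Rightarrow> bool" where
  "loop_at X x g \<equiv> pathin X g \<and> g 0 = x \<and> g 1 = x"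

definition trivial_loop :: "'a topology \<Rightarrow> 'a \<Rightarrow> (real \<Rightarrow> 'a) \<Rightarrow> bool" where
  "trivial_loop X x g \<equiv>
     homotopic_with (\<lambda>h. h 0 = x \<and> h 1 = x) (subtopology euclideanreal {0..1}) X g (\<lambda>_. x)"

definition nontrivial_loop :: "'a topology \<Rightarrow> 'a \<Rightarrow> (real \<Rightarrow> 'a) \<Rightarrow> bool" where
  "nontrivial_loop X x g \<equiv> loop_at X x g \<and> \<not> trivial_loop X x g"

definition null_sequence :: "'a topology \<Rightarrow> 'a \<Rightarrow> (nat \<Rightarrow> real \<Rightarrow> 'a) \<Rightarrow> bool" where
  "null_sequence X x \<alpha> \<equiv> (\<forall>n. loop_at X x (\<alpha> n)) \<and>
     (\<forall>U. openin X U \<and> x \<in> U \<longrightarrow> (\<forall>\<^sub>F n in sequentially. \<alpha> n ` {0..1} \<subseteq> U))"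

definition aw_set :: "'a topology \<Rightarrow> 'a set" where
  "aw_set X = {x \<in> topspace X. \<exists>\<alpha>. null_sequence X x \<alpha> \<and> (\<forall>n. nontrivial_loop X x (\<alpha> n))}"

definition w_set :: "'a topology \<Rightarrow> 'a set" where
  "w_set X = {x \<in> topspace X. \<forall>U. openin X U \<and> x \<in> U \<longrightarrow>
                 (\<exists>g. nontrivial_loop X x g \<and> g ` {0..1} \<subseteq> U)}"

end

theory Submission
  imports Defs
begin

text \<open>
  Both \<open>w\<close> and \<open>aw\<close> are carried into each other by homotopy equivalences: a map \<open>f\<close> with
  a left homotopy inverse \<open>g\<close> sends non-trivial loops to non-trivial loops, because a loop
  \<open>\<alpha>\<close> is freely homotopic, along the track of the homotopy \<open>g \<circ> f \<simeq> id\<close>, to \<open>g \<circ> f \<circ> \<alpha>\<close>,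
  and a loop bounding a disc is trivial. Hence a homotopy equivalence \<open>X \<simeq> Y\<close> restricts to
  homotopy equivalences \<open>w(X) \<simeq> w(Y)\<close> and \<open>aw(X) \<simeq> aw(Y)\<close>, the homotopies staying inside
  these subspaces since every stage of a homotopy to the identity again preserves them. In a
  first countable space a nested countable neighbourhood base turns the small loops witnessing
  \<open>x \<in> w(Y)\<close> into a null-sequence, so \<open>w(Y) = aw(Y)\<close>, and then \<open>w(X) \<simeq> aw(X)\<close>.
\<close>

lemma loop_at_compose:
  assumes "loop_at Y y \<beta>" "continuous_map Y X g"
  shows "loop_at X (g y) (g \<circ> \<beta>)"
  using assms unfolding loop_at_def pathin_def by (auto intro: continuous_map_compose)

lemma trivial_loop_compose:
  assumes "trivial_loop Y y \<beta>" "continuous_map Y X g"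
  shows "trivial_loop X (g y) (g \<circ> \<beta>)"
proof -
  have "homotopic_with (\<lambda>h. h 0 = g y \<and> h 1 = g y) (top_of_set {0..1}) X (g \<circ> \<beta>) (g \<circ> (\<lambda>_. y))"
    using assms unfolding trivial_loop_def
    by (rule homotopic_with_compose_continuous_map_left) auto
  then show ?thesis
    unfolding trivial_loop_def by (simp add: o_def)
qed

lemma trivial_loop_capped_cylinder:
  fixes X :: "'a topology" and Q :: "real \<times> real \<Rightarrow> 'a"
  assumes Q: "continuous_map (top_of_set ({0..1} \<times> {0..1})) X Q"
    and bottom: "\<And>a. a \<in> {0..1} \<Longrightarrow> Q (a, 0) = \<alpha> a"
    and sides: "\<And>h. h \<in> {0..1} \<Longrightarrow> Q (1, h) = Q (0, h)"
    and top: "\<And>a. a \<in> {0..1} \<Longrightarrow> Q (a, 1) = Q (0, 1)"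
  shows "trivial_loop X (\<alpha> 0) \<alpha>"
proof -
  define x where "x = \<alpha> 0"
  have Qx: "Q (0, 0) = x"
    using bottom[of 0] by (simp add: x_def)
  define P where "P = (\<lambda>p::real \<Rightarrow> 'a. p 0 = x \<and> p 1 = x)"
  define tent where "tent = (\<lambda>s::real. min 1 (min (3 * s) (3 * (1 - s))))"
  have tent01: "tent s \<in> {0..1}" if "s \<in> {0..1}" for s
    using that by (auto simp: tent_def)
  have tent_ends: "tent 0 = 0" "tent 1 = 0"
    by (simp_all add: tent_def)
  txt \<open>\<open>\<psi>\<close> runs up the seam, across the (constant) top and down the seam again. The first
    homotopy squeezes the bottom edge into the middle third while lifting the outer thirds up
    the two sides; the second contracts \<open>\<psi>\<close> along the seam.\<close>
  define \<psi> where "\<psi> = (\<lambda>s. Q (0, tent s))"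
  define A where "A = (\<lambda>t s::real. max 0 (min 1 ((s - t/3) / (1 - 2*t/3))))"
  have to_boundary: "homotopic_with P (top_of_set {0..1}) X \<alpha> \<psi>"
  proof (subst homotopic_with, force simp: P_def, intro exI conjI ballI)
    have "continuous_map (top_of_set ({0..1} \<times> {0..1})) (top_of_set ({0..1::real} \<times> {0..1::real}))
            (\<lambda>z. (A (fst z) (snd z), min (fst z) (tent (snd z))))"
      unfolding A_def tent_def
      by (simp only: continuous_map_subtopology_eu, intro conjI continuous_intros) (auto simp: Pi_iff)
    from continuous_map_compose[OF this Q]
    show "continuous_map (prod_topology (top_of_set {0..1}) (top_of_set {0..1})) X
                 (\<lambda>z. Q (A (fst z) (snd z), min (fst z) (tent (snd z))))"
      by (simp add: o_def)
    fix s assume s: "s \<in> topspace (top_of_set {0..1::real})"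
    then show "Q (A (fst (0, s)) (snd (0, s)), min (fst (0, s)) (tent (snd (0, s)))) = \<alpha> s"
      using bottom tent01[of s] by (simp add: A_def)
    have "Q (A 1 s, tent s) = \<psi> s"
    proof -
      consider "s \<le> 1/3" | "s \<ge> 2/3" | "1/3 \<le> s" "s \<le> 2/3" by linarith
      then show ?thesis
      proof cases
        case 1
        then show ?thesis by (simp add: A_def \<psi>_def)
      next
        case 2
        then show ?thesis using s sides tent01 by (simp add: A_def \<psi>_def)
      next
        case 3
        then have "tent s = 1" by (auto simp: tent_def)
        then show ?thesis using top[of "A 1 s"] by (simp add: A_def \<psi>_def)
      qed
    qed
    then show "Q (A (fst (1, s)) (snd (1, s)), min (fst (1, s)) (tent (snd (1, s)))) = \<psi> s"
      using s tent01[of s] by simp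
  next
    fix t :: real assume "t \<in> {0..1}"
    then have "A t 0 = 0" "A t 1 = 1"
      by (auto simp: A_def divide_simps)
    then show "P (\<lambda>s. Q (A (fst (t, s)) (snd (t, s)), min (fst (t, s)) (tent (snd (t, s)))))"
      using \<open>t \<in> {0..1}\<close> Qx sides[of 0] by (simp add: P_def tent_ends)
  qed
  have boundary_null: "homotopic_with P (top_of_set {0..1}) X \<psi> (\<lambda>_. x)"
  proof (subst homotopic_with, force simp: P_def, intro exI conjI ballI)
    have "continuous_map (top_of_set ({0..1} \<times> {0..1})) (top_of_set ({0..1::real} \<times> {0..1::real}))
            (\<lambda>z. (0, (1 - fst z) * tent (snd z)))"
      unfolding tent_def
      by (simp only: continuous_map_subtopology_eu, intro conjI continuous_intros)
         (auto simp: Pi_iff mult_le_one)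
    from continuous_map_compose[OF this Q]
    show "continuous_map (prod_topology (top_of_set {0..1}) (top_of_set {0..1})) X
                 (\<lambda>z. Q (0, (1 - fst z) * tent (snd z)))"
      by (simp add: o_def)
  qed (simp_all add: \<psi>_def P_def Qx tent_ends)
  show ?thesis
    using homotopic_with_trans[OF to_boundary boundary_null] unfolding trivial_loop_def P_def x_def .
qed

lemma continuous_map_stack_squares:
  fixes H :: "real \<times> 'a \<Rightarrow> 'a" and G :: "real \<times> real \<Rightarrow> 'a"
  assumes H: "continuous_map (prod_topology (top_of_set {0..1}) X) X H"
    and G: "continuous_map (prod_topology (top_of_set {0..1}) (top_of_set {0..1})) X G"
    and \<alpha>: "pathin X \<alpha>"
    and seam: "\<And>a. a \<in> {0..1} \<Longrightarrow> H (0, \<alpha> a) = G (0, a)"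
  shows "continuous_map (top_of_set ({0..1} \<times> {0..1})) X
           (\<lambda>z. if snd z \<le> 1/2 then H (1 - 2 * snd z, \<alpha> (fst z)) else G (2 * snd z - 1, fst z))"
proof (rule continuous_map_cases_le)
  let ?S = "top_of_set ({0..1::real} \<times> {0..1::real})"
  let ?lower = "subtopology ?S {z \<in> topspace ?S. snd z \<le> 1/2}"
  let ?upper = "subtopology ?S {z \<in> topspace ?S. 1/2 \<le> snd z}"
  show "continuous_map ?S euclideanreal snd" "continuous_map ?S euclideanreal (\<lambda>z. 1/2)"
    by (simp_all add: continuous_on_snd)
  have "continuous_map ?lower (top_of_set {0..1}) (\<lambda>z. 1 - 2 * snd z)"
    by (simp add: subtopology_subtopology, intro conjI continuous_intros) (auto simp: Pi_iff)
  moreover have "continuous_map ?lower (top_of_set {0..1}) fst"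
    by (simp add: subtopology_subtopology, intro conjI continuous_intros) (auto simp: Pi_iff)
  ultimately have "continuous_map ?lower (prod_topology (top_of_set {0..1}) X) (\<lambda>z. (1 - 2 * snd z, \<alpha> (fst z)))"
    using continuous_map_compose[OF _ \<alpha>[unfolded pathin_def]]
    by (intro continuous_map_pairedI) (auto simp: o_def)
  from continuous_map_compose[OF this H]
  show "continuous_map ?lower X (\<lambda>z. H (1 - 2 * snd z, \<alpha> (fst z)))"
    by (simp add: o_def)
  have "continuous_map ?upper (top_of_set ({0..1} \<times> {0..1})) (\<lambda>z. (2 * snd z - 1, fst z))"
    by (simp add: subtopology_subtopology, intro conjI continuous_intros) (auto simp: Pi_iff)
  from continuous_map_compose[OF this] G
  show "continuous_map ?upper X (\<lambda>z. G (2 * snd z - 1, fst z))"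
    by (simp add: o_def)
  show "H (1 - 2 * snd z, \<alpha> (fst z)) = G (2 * snd z - 1, fst z)"
    if "z \<in> topspace ?S" "snd z = 1/2" for z
  proof -
    have "1 - 2 * snd z = 0" "2 * snd z - 1 = 0"
      using that(2) by simp_all
    with that(1) seam show ?thesis by auto
  qed
qed

lemma trivial_loop_of_homotopic_id:
  fixes X :: "'a topology"
  assumes hom: "homotopic_with (\<lambda>_. True) X X k id"
    and \<alpha>: "loop_at X x \<alpha>"
    and null: "trivial_loop X (k x) (k \<circ> \<alpha>)"
  shows "trivial_loop X x \<alpha>"
proof -
  obtain H :: "real \<times> 'a \<Rightarrow> 'a" where H: "continuous_map (prod_topology (top_of_set {0..1}) X) X H"
    and H0: "\<And>y. H (0, y) = k y" and H1: "\<And>y. H (1, y) = y"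
    using hom unfolding homotopic_with_def id_apply by blast
  have path: "pathin X \<alpha>" and ends: "\<alpha> 0 = x" "\<alpha> 1 = x"
    using \<alpha> by (auto simp: loop_at_def)
  obtain G :: "real \<times> real \<Rightarrow> 'a" where G: "continuous_map (prod_topology (top_of_set {0..1}) (top_of_set {0..1})) X G"
    and G0: "\<And>s. s \<in> {0..1} \<Longrightarrow> G (0, s) = k (\<alpha> s)"
    and G1: "\<And>s. s \<in> {0..1} \<Longrightarrow> G (1, s) = k x"
    and G_ends: "\<And>t. t \<in> {0..1} \<Longrightarrow> G (t, 0) = k x \<and> G (t, 1) = k x"
    using null unfolding trivial_loop_def by (subst (asm) homotopic_with) auto
  txt \<open>The track of \<open>\<alpha>\<close> under \<open>H\<close>, capped by the null-homotopy of \<open>k \<circ> \<alpha>\<close>.\<close>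
  define Q where "Q = (\<lambda>z. if snd z \<le> 1/2 then H (1 - 2 * snd z, \<alpha> (fst z)) else G (2 * snd z - 1, fst z))"
  have "continuous_map (top_of_set ({0..1} \<times> {0..1})) X Q"
    unfolding Q_def by (rule continuous_map_stack_squares[OF H G path]) (simp add: H0 G0)
  then show ?thesis
    by (rule trivial_loop_capped_cylinder[where \<alpha> = \<alpha>, unfolded ends])
       (auto simp: Q_def H1 G1 G_ends ends)
qed

lemma nontrivial_loop_compose:
  assumes f: "continuous_map X Y f" and g: "continuous_map Y X g"
    and gf: "homotopic_with (\<lambda>_. True) X X (g \<circ> f) id"
    and \<alpha>: "nontrivial_loop X x \<alpha>"
  shows "nontrivial_loop Y (f x) (f \<circ> \<alpha>)"
proof -
  have loop: "loop_at X x \<alpha>" and nontriv: "\<not> trivial_loop X x \<alpha>"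
    using \<alpha> by (auto simp: nontrivial_loop_def)
  have "\<not> trivial_loop Y (f x) (f \<circ> \<alpha>)"
  proof
    assume "trivial_loop Y (f x) (f \<circ> \<alpha>)"
    from trivial_loop_compose[OF this g]
    have "trivial_loop X ((g \<circ> f) x) ((g \<circ> f) \<circ> \<alpha>)"
      by (simp add: o_assoc)
    with nontriv show False
      using trivial_loop_of_homotopic_id[OF gf loop] by blast
  qed
  with loop_at_compose[OF loop f] show ?thesis
    by (simp add: nontrivial_loop_def)
qed

lemma image_w_set_subset:
  assumes f: "continuous_map X Y f" and g: "continuous_map Y X g"
    and gf: "homotopic_with (\<lambda>_. True) X X (g \<circ> f) id"
  shows "f ` w_set X \<subseteq> w_set Y"
proof
  fix y assume "y \<in> f ` w_set X"
  then obtain x where x: "x \<in> w_set X" and y: "y = f x"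
    by blast
  have "\<exists>\<beta>. nontrivial_loop Y (f x) \<beta> \<and> \<beta> ` {0..1} \<subseteq> V" if V: "openin Y V" "f x \<in> V" for V
  proof -
    let ?U = "{z \<in> topspace X. f z \<in> V}"
    have "openin X ?U" "x \<in> ?U"
      using openin_continuous_map_preimage[OF f V(1)] x V(2) by (auto simp: w_set_def)
    then obtain \<alpha> where "nontrivial_loop X x \<alpha>" "\<alpha> ` {0..1} \<subseteq> ?U"
      using x unfolding w_set_def by blast
    then show ?thesis
      using nontrivial_loop_compose[OF f g gf] by (intro exI[of _ "f \<circ> \<alpha>"]) auto
  qed
  moreover have "f x \<in> topspace Y"
    using f x by (auto simp: w_set_def continuous_map_def)
  ultimately show "y \<in> w_set Y"
    by (simp add: w_set_def y)
qed

lemma image_aw_set_subset: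
  assumes f: "continuous_map X Y f" and g: "continuous_map Y X g"
    and gf: "homotopic_with (\<lambda>_. True) X X (g \<circ> f) id"
  shows "f ` aw_set X \<subseteq> aw_set Y"
proof
  fix y assume "y \<in> f ` aw_set X"
  then obtain x where x: "x \<in> aw_set X" and y: "y = f x"
    by blast
  then obtain \<alpha> where null: "null_sequence X x \<alpha>" and nontriv: "\<And>n. nontrivial_loop X x (\<alpha> n)"
    unfolding aw_set_def by blast
  have "null_sequence Y (f x) (\<lambda>n. f \<circ> \<alpha> n)"
    unfolding null_sequence_def
  proof (intro conjI allI impI)
    show "loop_at Y (f x) (f \<circ> \<alpha> n)" for n
      using null loop_at_compose[OF _ f] unfolding null_sequence_def by blast
    fix V assume V: "openin Y V \<and> f x \<in> V"
    let ?U = "{z \<in> topspace X. f z \<in> V}"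
    have "openin X ?U" "x \<in> ?U"
      using openin_continuous_map_preimage[OF f] V x by (auto simp: aw_set_def)
    then have "\<forall>\<^sub>F n in sequentially. \<alpha> n ` {0..1} \<subseteq> ?U"
      using null unfolding null_sequence_def by blast
    then show "\<forall>\<^sub>F n in sequentially. (f \<circ> \<alpha> n) ` {0..1} \<subseteq> V"
      by (rule eventually_mono) auto
  qed
  moreover have "f x \<in> topspace Y"
    using f x by (auto simp: aw_set_def continuous_map_def)
  ultimately show "y \<in> aw_set Y"
    using nontrivial_loop_compose[OF f g gf nontriv] unfolding aw_set_def y by blast
qed

lemma homotopic_id_image_w_set:
  assumes "homotopic_with (\<lambda>_. True) X X h id"
  shows "h ` w_set X \<subseteq> w_set X"
  using image_w_set_subset[OF homotopic_with_imp_continuous_maps[OF assms, THEN conjunct1] continuous_map_id]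
    assms by simp

lemma homotopic_id_image_aw_set:
  assumes "homotopic_with (\<lambda>_. True) X X h id"
  shows "h ` aw_set X \<subseteq> aw_set X"
  using image_aw_set_subset[OF homotopic_with_imp_continuous_maps[OF assms, THEN conjunct1] continuous_map_id]
    assms by simp

lemma homotopic_with_id_slice:
  fixes H :: "real \<times> 'a \<Rightarrow> 'a"
  assumes H: "continuous_map (prod_topology (top_of_set {0..1}) X) X H"
    and H1: "\<And>x. H (1, x) = x" and t: "t \<in> {0..1}"
  shows "homotopic_with (\<lambda>_. True) X X (\<lambda>x. H (t, x)) id"
proof -
  have "t + s * (1 - t) \<in> {0..1}" if "s \<in> {0..1}" for s
    using t that mult_left_le[of s "1 - t"] by (auto simp: mult.commute)
  then have rescale: "continuous_map (top_of_set {0..1}) (top_of_set {0..1::real}) (\<lambda>s. t + s * (1 - t))"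
    by (simp add: continuous_on_add continuous_on_mult_right)
  have "continuous_map (prod_topology (top_of_set {0..1}) X) (prod_topology (top_of_set {0..1}) X)
               (\<lambda>z. (t + fst z * (1 - t), snd z))"
    by (intro continuous_map_pairedI continuous_map_snd)
       (use continuous_map_compose[OF continuous_map_fst rescale] in \<open>simp add: o_def\<close>)
  from continuous_map_compose[OF this H] show ?thesis
    unfolding homotopic_with_def
    by (intro exI[of _ "\<lambda>z. H (t + fst z * (1 - t), snd z)"]) (simp add: o_def H1)
qed

lemma homotopic_with_id_subtopology:
  fixes X :: "'a topology"
  assumes k: "homotopic_with (\<lambda>_. True) X X k id"
    and invariant: "\<And>h. homotopic_with (\<lambda>_. True) X X h id \<Longrightarrow> h ` S \<subseteq> S"
  shows "homotopic_with (\<lambda>_. True) (subtopology X S) (subtopology X S) k id"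
proof -
  obtain H :: "real \<times> 'a \<Rightarrow> 'a" where H: "continuous_map (prod_topology (top_of_set {0..1}) X) X H"
    and H0: "\<And>x. H (0, x) = k x" and H1: "\<And>x. H (1, x) = x"
    using k unfolding homotopic_with_def id_apply by blast
  have "H (t, x) \<in> S" if "t \<in> {0..1}" "x \<in> S" for t x
    using invariant[OF homotopic_with_id_slice[OF H H1 that(1)]] that(2) by blast
  then have "continuous_map (prod_topology (top_of_set {0..1}) (subtopology X S)) (subtopology X S) H"
    by (intro continuous_map_into_subtopology)
       (auto simp: prod_topology_subtopology(2) Pi_iff intro: continuous_map_from_subtopology[OF H])
  with H0 H1 show ?thesis
    unfolding homotopic_with_def by auto
qed

lemma homotopy_equivalent_space_subtopologies:
  assumes "continuous_map X Y f" "continuous_map Y X g"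
    and gf: "homotopic_with (\<lambda>_. True) X X (g \<circ> f) id"
    and fg: "homotopic_with (\<lambda>_. True) Y Y (f \<circ> g) id"
    and "f ` S \<subseteq> T" "g ` T \<subseteq> S"
    and S: "\<And>h. homotopic_with (\<lambda>_. True) X X h id \<Longrightarrow> h ` S \<subseteq> S"
    and T: "\<And>h. homotopic_with (\<lambda>_. True) Y Y h id \<Longrightarrow> h ` T \<subseteq> T"
  shows "subtopology X S homotopy_equivalent_space subtopology Y T"
  unfolding homotopy_equivalent_space_def
proof (intro exI conjI)
  show "continuous_map (subtopology X S) (subtopology Y T) f"
    using assms by (intro continuous_map_into_subtopology continuous_map_from_subtopology) auto
  show "continuous_map (subtopology Y T) (subtopology X S) g"
    using assms by (intro continuous_map_into_subtopology continuous_map_from_subtopology) auto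
  show "homotopic_with (\<lambda>_. True) (subtopology X S) (subtopology X S) (g \<circ> f) id"
    using gf S by (rule homotopic_with_id_subtopology)
  show "homotopic_with (\<lambda>_. True) (subtopology Y T) (subtopology Y T) (f \<circ> g) id"
    using fg T by (rule homotopic_with_id_subtopology)
qed

lemma aw_set_subset_w_set: "aw_set X \<subseteq> w_set X"
proof
  fix x assume "x \<in> aw_set X"
  then obtain \<alpha> where null: "null_sequence X x \<alpha>" and nontriv: "\<And>n. nontrivial_loop X x (\<alpha> n)"
    and x: "x \<in> topspace X"
    unfolding aw_set_def by blast
  have "\<exists>\<beta>. nontrivial_loop X x \<beta> \<and> \<beta> ` {0..1} \<subseteq> U" if "openin X U" "x \<in> U" for U
  proof -
    have "\<forall>\<^sub>F n in sequentially. \<alpha> n ` {0..1} \<subseteq> U"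
      using null that unfolding null_sequence_def by blast
    then obtain n where "\<alpha> n ` {0..1} \<subseteq> U"
      using eventually_sequentially by auto
    with nontriv show ?thesis by blast
  qed
  with x show "x \<in> w_set X"
    unfolding w_set_def by blast
qed

lemma first_countable_nested_neighbourhoods:
  assumes "first_countable X" "x \<in> topspace X"
  obtains U :: "nat \<Rightarrow> 'a set"
  where "\<And>n. openin X (U n)" "\<And>n. x \<in> U n"
    "\<And>V. openin X V \<Longrightarrow> x \<in> V \<Longrightarrow> \<exists>m. \<forall>n\<ge>m. U n \<subseteq> V"
proof -
  obtain \<B> where "countable \<B>" and open_\<B>: "\<And>B. B \<in> \<B> \<Longrightarrow> openin X B"
    and base: "\<And>V. openin X V \<Longrightarrow> x \<in> V \<Longrightarrow> \<exists>B\<in>\<B>. x \<in> B \<and> B \<subseteq> V"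
    using assms unfolding first_countable_def by meson
  define \<C> where "\<C> = {B \<in> \<B>. x \<in> B}"
  have "countable \<C>"
    using \<open>countable \<B>\<close> by (simp add: \<C>_def)
  moreover have "\<C> \<noteq> {}"
    using base[OF openin_topspace assms(2)] by (auto simp: \<C>_def)
  ultimately have \<C>: "from_nat_into \<C> n \<in> \<C>" "\<And>B. B \<in> \<C> \<Longrightarrow> \<exists>n. from_nat_into \<C> n = B" for n
    by (auto intro: from_nat_into from_nat_into_surj)
  show ?thesis
  proof
    show "openin X (\<Inter>i\<le>n. from_nat_into \<C> i)" for n
      using \<C> open_\<B> by (intro openin_Inter) (auto simp: \<C>_def)
    show "x \<in> (\<Inter>i\<le>n. from_nat_into \<C> i)" for n
      using \<C> by (auto simp: \<C>_def)
    show "\<exists>m. \<forall>n\<ge>m. (\<Inter>i\<le>n. from_nat_into \<C> i) \<subseteq> V" if V: "openin X V" "x \<in> V" for V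
    proof -
      obtain m where "from_nat_into \<C> m \<subseteq> V"
        using base[OF V] \<C>(2) unfolding \<C>_def by blast
      then show ?thesis
        by (intro exI[of _ m]) auto
    qed
  qed
qed

lemma first_countable_w_set_subset_aw_set:
  fixes X :: "'a topology"
  assumes "first_countable X"
  shows "w_set X \<subseteq> aw_set X"
proof
  fix x assume x: "x \<in> w_set X"
  then have "x \<in> topspace X"
    by (simp add: w_set_def)
  obtain U :: "nat \<Rightarrow> 'a set" where open_U: "\<And>n. openin X (U n)" and x_U: "\<And>n. x \<in> U n"
    and shrink: "\<And>V. openin X V \<Longrightarrow> x \<in> V \<Longrightarrow> \<exists>m. \<forall>n\<ge>m. U n \<subseteq> V"
    using first_countable_nested_neighbourhoods[OF assms \<open>x \<in> topspace X\<close>] by metis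
  have "\<forall>n. \<exists>\<beta>. nontrivial_loop X x \<beta> \<and> \<beta> ` {0..1} \<subseteq> U n"
    using x open_U x_U unfolding w_set_def by blast
  then obtain \<alpha> where \<alpha>: "\<And>n. nontrivial_loop X x (\<alpha> n)" "\<And>n. \<alpha> n ` {0..1} \<subseteq> U n"
    by metis
  have "null_sequence X x \<alpha>"
    unfolding null_sequence_def
  proof (intro conjI allI impI)
    show "loop_at X x (\<alpha> n)" for n
      using \<alpha>(1) by (simp add: nontrivial_loop_def)
    fix V assume "openin X V \<and> x \<in> V"
    then obtain m where "\<forall>n\<ge>m. U n \<subseteq> V"
      using shrink by blast
    then have "\<alpha> n ` {0..1} \<subseteq> V" if "m \<le> n" for n
      using \<alpha>(2)[of n] that by blast
    then show "\<forall>\<^sub>F n in sequentially. \<alpha> n ` {0..1} \<subseteq> V"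
      unfolding eventually_sequentially by blast
  qed
  with \<alpha>(1) \<open>x \<in> topspace X\<close> show "x \<in> aw_set X"
    unfolding aw_set_def by blast
qed

theorem mainTheorem7:
  fixes X :: "'a topology"
  assumes "\<not> (subtopology X (w_set X) homotopy_equivalent_space subtopology X (aw_set X))"
  shows "\<forall>Y :: 'b topology. first_countable Y \<longrightarrow> \<not> (X homotopy_equivalent_space Y)"
proof (intro allI impI notI)
  fix Y :: "'b topology"
  assume "first_countable Y" and "X homotopy_equivalent_space Y"
  then obtain f g where f: "continuous_map X Y f" and g: "continuous_map Y X g"
    and gf: "homotopic_with (\<lambda>x. True) X X (g \<circ> f) id"
    and fg: "homotopic_with (\<lambda>x. True) Y Y (f \<circ> g) id"
    unfolding homotopy_equivalent_space_def by blast
  have w: "subtopology X (w_set X) homotopy_equivalent_space subtopology Y (w_set Y)"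
    by (rule homotopy_equivalent_space_subtopologies[OF f g gf fg
          image_w_set_subset[OF f g gf] image_w_set_subset[OF g f fg]
          homotopic_id_image_w_set homotopic_id_image_w_set])
  have aw: "subtopology Y (aw_set Y) homotopy_equivalent_space subtopology X (aw_set X)"
    by (rule homotopy_equivalent_space_subtopologies[OF g f fg gf
          image_aw_set_subset[OF g f fg] image_aw_set_subset[OF f g gf]
          homotopic_id_image_aw_set homotopic_id_image_aw_set])
  have w_eq_aw: "w_set Y = aw_set Y"
    using first_countable_w_set_subset_aw_set[OF \<open>first_countable Y\<close>] aw_set_subset_w_set
    by (rule subset_antisym)
  from homotopy_eqv_trans[OF w[unfolded w_eq_aw] aw] assms show False
    by contradiction
qed

end
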